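(* Let $X=\{x_i\}_{i=1}^n\subset\mathbb{R}^d$, $0<\varepsilon<1$, and $T=\{(x-y)/\|x-y\|: x\ne y\in X\}\cup\{0\}$. Suppose $\Pi\in\mathbb{R}^{k\times d}$ has $\varepsilon$-convex hull distortion for $X$. Then $$\forall x,y\in\mathrm{conv}(T):\ |\langle\Pi x,\Pi y\rangle-\langle x,y\rangle|\le 6\varepsilon.$$
   Context: Norms and inner products are Euclidean. $\Pi$ has $\varepsilon$-convex hull distortion for $X$ if $\big|\|\Pi z\|-\|z\|\big|\le\varepsilon$ for all $z\in\mathrm{conv}(\{(x-y)/\|x-y\|: x\ne y\in X\})$. *)

theory Defs
  imports "HOL-Analysis.Analysis"
begin

definition unit_diffs :: "('a::real_normed_vector) set \<Rightarrow> 'a set" where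
  "unit_diffs X = {(x - y) /\<^sub>R norm (x - y) | x y. x \<in> X \<and> y \<in> X \<and> x \<noteq> y}"

definition convex_hull_distortion ::
  "real^'d^'k \<Rightarrow> real \<Rightarrow> (real^'d) set \<Rightarrow> bool" where
  "convex_hull_distortion P eps X \<longleftrightarrow>
     (\<forall>z \<in> convex hull (unit_diffs X). \<bar>norm (P *v z) - norm z\<bar> \<le> eps)"

end

theory Submission
  imports Defs
begin

text \<open>Let K be the convex hull of T. K is convex and symmetric, and \<open>\<Pi>\<close> distorts squared norms on K
  by at most \<open>3\<epsilon>\<close>, since \<open>\<Pi>\<close> distorts norms on K by at most \<open>\<epsilon>\<close> and K lies in the unit ball.
  For x, y in K the points (x + y)/2 and (x - y)/2 lie in K again, and polarization writes
  \<open>\<langle>\<Pi>x,\<Pi>y\<rangle> - \<langle>x,y\<rangle>\<close> as the difference of the squared-norm distortions at these two points.\<close>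

lemma uminus_unit_diffs: "uminus ` unit_diffs X = unit_diffs X"
proof -
  have "- z \<in> unit_diffs X" if "z \<in> unit_diffs X" for z and X :: "'a set"
  proof -
    from that obtain x y where "x \<in> X" "y \<in> X" "x \<noteq> y" "z = (x - y) /\<^sub>R norm (x - y)"
      unfolding unit_diffs_def by blast
    then have "x \<in> X \<and> y \<in> X \<and> y \<noteq> x \<and> - z = (y - x) /\<^sub>R norm (y - x)"
      by (simp add: norm_minus_commute algebra_simps)
    then show ?thesis
      unfolding unit_diffs_def by blast
  qed
  then show ?thesis
    by (force intro: image_eqI[where x = "- _"])
qed

lemma uminus_convex_hull_unit_diffs_insert_0:
  assumes "z \<in> convex hull (unit_diffs X \<union> {0})"
  shows "- z \<in> convex hull (unit_diffs X \<union> {0})"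
proof -
  have "uminus ` (convex hull (unit_diffs X \<union> {0})) = convex hull (unit_diffs X \<union> {0})"
    using convex_hull_linear_image[OF linear_uminus, of "unit_diffs X \<union> {0}"]
    by (simp add: image_Un uminus_unit_diffs)
  then show ?thesis
    using assms by blast
qed

lemma convex_hull_unit_diffs_insert_0_subset_cball:
  "convex hull (unit_diffs X \<union> {0}) \<subseteq> cball 0 1"
  by (rule hull_minimal) (auto simp: unit_diffs_def)

lemma linear_norm_distortion_convex_hull_insert_0:
  fixes f :: "'a::real_normed_vector \<Rightarrow> 'b::real_normed_vector"
  assumes "linear f" "0 \<le> eps"
    and distortion: "\<And>z. z \<in> convex hull S \<Longrightarrow> \<bar>norm (f z) - norm z\<bar> \<le> eps"
    and "z \<in> convex hull (insert 0 S)"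
  shows "\<bar>norm (f z) - norm z\<bar> \<le> eps"
proof (cases "S = {}")
  case True
  then show ?thesis
    using assms by (simp add: linear_0)
next
  case False
  then obtain u s where "0 \<le> u" "u \<le> 1" "s \<in> convex hull S" "z = u *\<^sub>R s"
    using assms(4) by (auto simp: convex_hull_insert_alt)
  then have "\<bar>norm (f z) - norm z\<bar> = u * \<bar>norm (f s) - norm s\<bar>"
    by (simp add: linear_scale[OF \<open>linear f\<close>] abs_mult flip: right_diff_distrib)
  also have "\<dots> \<le> eps"
    using distortion[OF \<open>s \<in> convex hull S\<close>] \<open>0 \<le> u\<close> \<open>u \<le> 1\<close> \<open>0 \<le> eps\<close>
    by (metis abs_ge_zero mult_left_le_one_le mult_mono order.trans)
  finally show ?thesis .
qed

lemma abs_diff_squares_le: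
  fixes a b eps :: real
  assumes "\<bar>a - b\<bar> \<le> eps" "0 \<le> b" "b \<le> 1" "eps \<le> 1"
  shows "\<bar>a\<^sup>2 - b\<^sup>2\<bar> \<le> 3 * eps"
proof -
  have "\<bar>a\<^sup>2 - b\<^sup>2\<bar> = \<bar>a - b\<bar> * \<bar>a + b\<bar>"
    by (simp add: power2_eq_square abs_mult[symmetric] algebra_simps)
  also have "\<dots> \<le> eps * 3"
    using assms by (intro mult_mono) auto
  finally show ?thesis
    by simp
qed

lemma linear_inner_polarization:
  fixes f :: "'a::real_inner \<Rightarrow> 'b::real_inner"
  assumes "linear f"
  defines "q \<equiv> \<lambda>z. f z \<bullet> f z - z \<bullet> z"
  shows "f x \<bullet> f y - x \<bullet> y = q ((x + y) /\<^sub>R 2) - q ((x - y) /\<^sub>R 2)"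
  unfolding q_def
  by (simp add: linear_add[OF assms(1)] linear_diff[OF assms(1)] linear_scale[OF assms(1)]
      inner_add_left inner_add_right inner_diff_left inner_diff_right inner_commute)
    (simp add: field_simps)

lemma linear_inner_distortion_symmetric_convex:
  fixes f :: "'a::real_inner \<Rightarrow> 'b::real_inner"
  assumes "linear f" "convex K" "\<And>z. z \<in> K \<Longrightarrow> - z \<in> K"
    and sq_distortion: "\<And>z. z \<in> K \<Longrightarrow> \<bar>f z \<bullet> f z - z \<bullet> z\<bar> \<le> delta"
    and "x \<in> K" "y \<in> K"
  shows "\<bar>f x \<bullet> f y - x \<bullet> y\<bar> \<le> 2 * delta"
proof -
  define s t where "s = (x + y) /\<^sub>R 2" and "t = (x - y) /\<^sub>R 2"
  have "s \<in> K" "t \<in> K"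
    using convexD[OF \<open>convex K\<close> \<open>x \<in> K\<close> \<open>y \<in> K\<close>, of "1/2" "1/2"]
      convexD[OF \<open>convex K\<close> \<open>x \<in> K\<close> assms(3)[OF \<open>y \<in> K\<close>], of "1/2" "1/2"]
    by (simp_all add: s_def t_def scaleR_add_right scaleR_diff_right)
  then have "\<bar>f s \<bullet> f s - s \<bullet> s\<bar> \<le> delta" "\<bar>f t \<bullet> f t - t \<bullet> t\<bar> \<le> delta"
    using sq_distortion by blast+
  then show ?thesis
    using linear_inner_polarization[OF \<open>linear f\<close>, of x y] unfolding s_def t_def by linarith
qed

theorem lemmaB3:
  fixes X :: "(real^'d) set" and P :: "real^'d^'k" and eps :: real
  assumes "finite X"
    and "0 < eps" and "eps < 1"
    and "convex_hull_distortion P eps X"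
  shows "\<forall>x \<in> convex hull (unit_diffs X \<union> {0}). \<forall>y \<in> convex hull (unit_diffs X \<union> {0}).
           \<bar>(P *v x) \<bullet> (P *v y) - x \<bullet> y\<bar> \<le> 6 * eps"
proof (intro ballI)
  let ?K = "convex hull (unit_diffs X \<union> {0})"
  have "\<bar>(P *v z) \<bullet> (P *v z) - z \<bullet> z\<bar> \<le> 3 * eps" if "z \<in> ?K" for z
  proof -
    have "\<bar>norm (P *v z) - norm z\<bar> \<le> eps"
      using linear_norm_distortion_convex_hull_insert_0[of "(*v) P" eps "unit_diffs X" z]
        assms(2,4) that unfolding convex_hull_distortion_def by simp
    moreover have "norm z \<le> 1"
      using subsetD[OF convex_hull_unit_diffs_insert_0_subset_cball that] by simp
    ultimately show ?thesis
      using abs_diff_squares_le \<open>eps < 1\<close> by (simp add: power2_norm_eq_inner[symmetric])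
  qed
  then show "\<bar>(P *v x) \<bullet> (P *v y) - x \<bullet> y\<bar> \<le> 6 * eps" if "x \<in> ?K" "y \<in> ?K" for x y
    using linear_inner_distortion_symmetric_convex[OF matrix_vector_mul_linear convex_convex_hull
        uminus_convex_hull_unit_diffs_insert_0] that
    by fastforce
qed

end
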